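(* Let $\bar c$, $\Delta$ be as below and let $\bar\xi$ be a type (2) vertex of $\Delta$, with $c=2\bar c-d$ and $\xi=2\bar\xi-d$ collinear with an edge $vw$ of $\operatorname{conv}(\mathcal W)$ having no points of $\mathcal W$ in its interior, and suppose $c=2v-w$. Then either $w$ is of type I, or $w$ is of type III and $v_i=-1$, $w_i=-2$ for some index $i$.
   Context: Setting: $G$ compact Lie group, $K\subset G$ closed, $G/K$ connected almost effective, isotropy representation $\mathfrak p=\mathfrak p_1\oplus\cdots\oplus\mathfrak p_r$ ($r\ge2$) with pairwise inequivalent $\mathbb R$-irreducible summands, $d_i=\dim\mathfrak p_i$, $d=(d_1,\dots,d_r)$, $n=\sum d_i$. The scalar curvature of the metric $e^{q_i}Q$ on $\mathfrak p_i$ is $S(q)=\sum_{w\in\mathcal W}A_we^{w\cdot q}$, $\mathcal W\subset\mathbb Z^r$ finite, $A_w\ne0$, each $w$ of type I (one entry $-1$), type II (one entry $1$, two entries $-1$) or type III (one entry $1$, one entry $-2$), other entries $0$; $A_w>0$ for type I and $<0$ otherwise. Assume $\dim\operatorname{conv}(\mathcal W)=r-1$. $J$ is the symmetric bilinear form with $J(p,p)=\frac1{n-1}(\sum p_i)^2-\sum p_i^2/d_i$; null means $J(\bar x,\bar x)=0$. $u=\sum_{\bar c\in\mathcal C}F_{\bar c}e^{\bar c\cdot q}$ ($\mathcal C$ finite, $F_{\bar c}\ne0$) is a superpotential: for every $\xi$, $\sum_{(\bar a,\bar c)\in\mathcal C^2,\ \bar a+\bar c=\xi}J(\bar a,\bar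 c)F_{\bar a}F_{\bar c}$ equals $A_w$ if $\xi=d+w$, $w\in\mathcal W$, and $0$ otherwise; $\mathcal C$ lies in $\mathcal H=\{\sum\bar x_i=\frac12(n-1)\}$. For $x$ with $\sum x_i=-1$ write $\bar x=\frac12(d+x)$. $\bar c$ is a null vertex of $\operatorname{conv}(\mathcal C)$ (lying outside $\operatorname{conv}(\frac12(d+\mathcal W))$); $H'\subset\mathcal H$ is an affine hyperplane strictly separating $\bar c$ from $\operatorname{conv}(\frac12(d+\mathcal W))$, and $\Delta$ is the image of $\operatorname{conv}(\frac12(d+\mathcal W))$ under $\bar z\mapsto$ (intersection of the ray from $\bar c$ through $\bar z$ with $H'$). A vertex $\bar\xi$ of $\Delta$ is of type (2) if $J(\bar c,\bar\xi)\ne0$ and $\bar c,\bar\xi$ are collinear with an edge of $\operatorname{conv}(\frac12(d+\mathcal W))$. *)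

theory Defs
  imports "HOL-Analysis.Analysis"
begin

(* Vectors in R^r are modelled as real^'n, with r = CARD('n). *)

definition type_I :: "real^'n \<Rightarrow> bool" where
  "type_I w \<longleftrightarrow> (\<exists>i. w$i = -1 \<and> (\<forall>j. j \<noteq> i \<longrightarrow> w$j = 0))"

definition type_II :: "real^'n \<Rightarrow> bool" where
  "type_II w \<longleftrightarrow> (\<exists>i j k. i \<noteq> j \<and> i \<noteq> k \<and> j \<noteq> k \<and>
      w$i = 1 \<and> w$j = -1 \<and> w$k = -1 \<and>
      (\<forall>l. l \<noteq> i \<and> l \<noteq> j \<and> l \<noteq> k \<longrightarrow> w$l = 0))"

definition type_III :: "real^'n \<Rightarrow> bool" where
  "type_III w \<longleftrightarrow> (\<exists>i j. i \<noteq> j \<and> w$i = 1 \<and> w$j = -2 \<and>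
      (\<forall>l. l \<noteq> i \<and> l \<noteq> j \<longrightarrow> w$l = 0))"

definition vsum :: "real^'n \<Rightarrow> real" where
  "vsum x = (\<Sum>i\<in>UNIV. x$i)"

(* the bilinear form J (depends on d); n = sum of the d_i *)
definition Jform :: "real^'n \<Rightarrow> real^'n \<Rightarrow> real^'n \<Rightarrow> real" where
  "Jform d p q = (vsum p * vsum q) / (vsum d - 1) - (\<Sum>i\<in>UNIV. p$i * q$i / d$i)"

definition Hplane :: "real^'n \<Rightarrow> (real^'n) set" where
  "Hplane d = {x. vsum x = (vsum d - 1) / 2}"

(* the superpotential equation for u = sum_{c in C} F_c e^{c.q} w.r.t. S = sum_{w in W} A_w e^{w.q} *)
definition superpotential ::
  "real^'n \<Rightarrow> (real^'n) set \<Rightarrow> (real^'n \<Rightarrow> real) \<Rightarrow> (real^'n) set \<Rightarrow> (real^'n \<Rightarrow> real) \<Rightarrow> bool" where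
  "superpotential d W A C F \<longleftrightarrow>
     finite C \<and> (\<forall>c\<in>C. F c \<noteq> 0) \<and> C \<subseteq> Hplane d \<and>
     (\<forall>\<xi>. (\<Sum>(a, c) \<in> {(a, c) \<in> C \<times> C. a + c = \<xi>}. Jform d a c * F a * F c)
            = (if \<xi> - d \<in> W then A (\<xi> - d) else 0))"

end

theory Submission
  imports Defs
begin

(*
  Write bar d x = (d + x)/2 for the paper's x-bar.  The superpotential equation couples only
  exponents of u with equal sums.  If a set G of exponents with nonzero F has vanishing
  coefficients at all sums a + b (a, b in G), maximising the d-weighted norm <x,x>_d on G gives an
  exponent p whose pair (p, p) is alone in its sum, so J(p,p) = 0; the maximiser q of <p,.>_d on
  the rest is then alone with p, and J(p,q) = <p,p>_d - <p,q>_d > 0 gives a nonzero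
  coefficient.  Hence G has at most one element.  Rotating a strict supporting functional of the
  vertex cb until it meets C a second time, this shows that an affine function which vanishes at cb
  and is nonnegative on bar d ` W is nonnegative on C.

  For the functional exposing the edge vw (which vanishes at cb since c = 2v - w), this confines
  every pair of exponents with sum on the line 2 cb + s delta, delta = bar d v - cb, to the line
  cb + t delta, t >= 0.  There J(cb + a delta, cb + b delta) = (a + b) beta + a b gamma with
  beta = J(cb, delta) <> 0 (because of xib), and the equation becomes a one-variable problem whose
  only nonzero coefficients sit at s = 2 (A_v) and s = 4 (A_w); it forces the largest parameter to be
  2, so A_w = J(bar w, bar w) F(bar w)^2.  Finally J(bar w, bar w) = sum_i v_i (v_i - w_i) / d_i,
  which is nonnegative unless v_i = -1 and w_i = -2 for some i; otherwise A_w >= 0 makes w of type I.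
*)

section \<open>The weighted inner product and the form J\<close>

definition wdot :: "real^'n \<Rightarrow> real^'n \<Rightarrow> real^'n \<Rightarrow> real" where
  "wdot d p q = (\<Sum>i\<in>UNIV. p$i * q$i / d$i)"

lemma vsum_add [simp]: "vsum (x + y) = vsum x + vsum y"
  by (simp add: vsum_def sum.distrib)

lemma vsum_diff [simp]: "vsum (x - y) = vsum x - vsum y"
  by (simp add: vsum_def sum_subtractf)

lemma vsum_scaleR [simp]: "vsum (c *\<^sub>R x) = c * vsum x"
  by (simp add: vsum_def sum_distrib_left)

lemma vsum_eq_sum_support:
  assumes "\<And>i. i \<notin> S \<Longrightarrow> x$i = 0"
  shows "vsum x = (\<Sum>i\<in>S. x$i)"
  unfolding vsum_def using assms by (intro sum.mono_neutral_right) auto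

lemma wdot_commute: "wdot d x y = wdot d y x"
  by (simp add: wdot_def mult.commute)

lemma wdot_add_left: "wdot d (x + y) z = wdot d x z + wdot d y z"
  by (simp add: wdot_def sum.distrib[symmetric] algebra_simps add_divide_distrib)

lemma wdot_diff_left: "wdot d (x - y) z = wdot d x z - wdot d y z"
  by (simp add: wdot_def sum_subtractf[symmetric] algebra_simps diff_divide_distrib)

lemma wdot_add_right: "wdot d z (x + y) = wdot d z x + wdot d z y"
  by (metis wdot_commute wdot_add_left)

lemma wdot_diff_right: "wdot d z (x - y) = wdot d z x - wdot d z y"
  by (metis wdot_commute wdot_diff_left)

lemma wdot_self_pos:
  assumes "\<And>i. 0 < d$i" and "z \<noteq> 0"
  shows "0 < wdot d z z"
proof -
  obtain i where i: "z$i \<noteq> 0" using assms(2) by (metis vec_eq_iff zero_index)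
  have "z$i * z$i / d$i \<le> wdot d z z"
    unfolding wdot_def by (rule member_le_sum) (use assms(1) in \<open>auto intro!: divide_nonneg_pos\<close>)
  moreover have "0 < z$i * z$i / d$i"
    using i assms(1) by (intro divide_pos_pos) (auto simp: zero_less_mult_iff)
  ultimately show ?thesis by linarith
qed

lemma wdot_lt_if_norm_le:
  assumes "\<And>i. 0 < d$i" "q \<noteq> p" "wdot d q q \<le> wdot d p p"
  shows "wdot d p q < wdot d p p"
proof -
  have "0 < wdot d (p - q) (p - q)"
    using wdot_self_pos[OF assms(1)] assms(2) by simp
  also have "wdot d (p - q) (p - q) = wdot d p p + wdot d q q - 2 * wdot d p q"
    by (simp add: wdot_diff_left wdot_diff_right wdot_commute[of d q p])
  finally show ?thesis using assms(3) by linarith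
qed

lemma Jform_eq_wdot: "Jform d p q = vsum p * vsum q / (vsum d - 1) - wdot d p q"
  by (simp add: Jform_def wdot_def)

lemma Jform_commute: "Jform d x y = Jform d y x"
  by (simp add: Jform_eq_wdot wdot_commute[of d x y] mult.commute)

lemma Jform_add_left: "Jform d (x + y) z = Jform d x z + Jform d y z"
  by (simp add: Jform_eq_wdot wdot_add_left algebra_simps add_divide_distrib)

lemma Jform_scaleR_left: "Jform d (c *\<^sub>R x) z = c * Jform d x z"
  by (simp add: Jform_eq_wdot wdot_def sum_distrib_left algebra_simps)

lemma Jform_add_right: "Jform d z (x + y) = Jform d z x + Jform d z y"
  by (metis Jform_commute Jform_add_left)

lemma Jform_scaleR_right: "Jform d z (c *\<^sub>R x) = c * Jform d z x"
  by (metis Jform_commute Jform_scaleR_left)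

lemma Jform_on_Hplane:
  assumes "p \<in> Hplane d" "q \<in> Hplane d" "vsum d \<noteq> 1"
  shows "Jform d p q = (vsum d - 1) / 4 - wdot d p q"
proof -
  have p: "vsum p = (vsum d - 1) / 2" and q: "vsum q = (vsum d - 1) / 2"
    using assms(1,2) unfolding Hplane_def by simp_all
  have "vsum p * vsum q = (vsum d - 1) * (vsum d - 1) / 4"
    unfolding p q by simp
  then have "vsum p * vsum q / (vsum d - 1) = (vsum d - 1) / 4"
    using assms(3) by simp
  then show ?thesis
    unfolding Jform_eq_wdot by simp
qed

lemma Jform_on_line:
  assumes "Jform d c c = 0"
  shows "Jform d (c + a *\<^sub>R \<delta>) (c + b *\<^sub>R \<delta>) = (a + b) * Jform d c \<delta> + a * b * Jform d \<delta> \<delta>"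
  using assms
  by (simp add: Jform_add_left Jform_add_right Jform_scaleR_left Jform_scaleR_right
      Jform_commute[of d \<delta> c] algebra_simps)

section \<open>Sums over pairs with prescribed sum\<close>

definition pair_sum :: "('a::ab_group_add \<Rightarrow> 'a \<Rightarrow> 'b::comm_monoid_add) \<Rightarrow> 'a set \<Rightarrow> 'a \<Rightarrow> 'b" where
  "pair_sum g T s = (\<Sum>(a, b) \<in> {(a, b) \<in> T \<times> T. a + b = s}. g a b)"

lemma pair_sum_empty:
  assumes "{(a, b) \<in> T \<times> T. a + b = s} = {}"
  shows "pair_sum g T s = 0"
  unfolding pair_sum_def assms by simp

lemma pair_sum_singleton:
  "{(a, b) \<in> T \<times> T. a + b = s} = {(p, p)} \<Longrightarrow> pair_sum g T s = g p p"
  by (simp add: pair_sum_def)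

lemma pair_sum_swap:
  "{(a, b) \<in> T \<times> T. a + b = s} = {(p, q), (q, p)} \<Longrightarrow> p \<noteq> q \<Longrightarrow>
    pair_sum g T s = g p q + g q p"
  by (simp add: pair_sum_def)

lemma pair_sum_subset:
  assumes "G \<subseteq> T" "\<And>x y. x \<in> T \<Longrightarrow> y \<in> T \<Longrightarrow> x + y = s \<Longrightarrow> x \<in> G \<and> y \<in> G"
  shows "pair_sum g T s = pair_sum g G s"
proof -
  have "{(x, y) \<in> T \<times> T. x + y = s} = {(x, y) \<in> G \<times> G. x + y = s}"
    using assms by blast
  then show ?thesis unfolding pair_sum_def by simp
qed

lemma pair_sum_reindex:
  fixes P Q :: "'a::ab_group_add \<Rightarrow> 'b::ab_group_add"
  assumes "inj P" "inj Q" "\<And>a b. P a + P b = Q (a + b)"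
    and "\<And>x y. x \<in> T \<Longrightarrow> y \<in> T \<Longrightarrow> x + y = Q s \<Longrightarrow> x \<in> range P \<and> y \<in> range P"
  shows "pair_sum g T (Q s) = pair_sum (\<lambda>a b. g (P a) (P b)) (P -` T) s"
  unfolding pair_sum_def
proof (rule sum.reindex_cong[where l = "map_prod P P"])
  show "inj_on (map_prod P P) {(a, b) \<in> P -` T \<times> P -` T. a + b = s}"
    using assms(1) by (auto simp: inj_on_def inj_def)
  show "{(x, y) \<in> T \<times> T. x + y = Q s} = map_prod P P ` {(a, b) \<in> P -` T \<times> P -` T. a + b = s}"
  proof (intro equalityI subsetI)
    fix z assume "z \<in> {(x, y) \<in> T \<times> T. x + y = Q s}"
    then obtain x y where z: "z = (x, y)" "x \<in> T" "y \<in> T" "x + y = Q s" by auto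
    then obtain a b where ab: "x = P a" "y = P b" using assms(4) by blast
    then have "a + b = s" using z(4) assms(2,3) by (metis injD)
    then show "z \<in> map_prod P P ` {(a, b) \<in> P -` T \<times> P -` T. a + b = s}"
      using z ab by (auto intro!: image_eqI[where x = "(a, b)"])
  qed (use assms(3) in auto)
qed auto

lemma pairs_at_twice_max:
  fixes T :: "real set"
  assumes "m \<in> T" "\<And>x. x \<in> T \<Longrightarrow> x \<le> m"
  shows "{(a, b) \<in> T \<times> T. a + b = m + m} = {(m, m)}"
  using assms by (force dest: assms(2))

lemma pairs_at_max_plus_next:
  fixes T :: "real set"
  assumes "m \<in> T" "p \<in> T" "p < m" "\<And>x. x \<in> T \<Longrightarrow> x \<noteq> m \<Longrightarrow> x \<le> p"
  shows "{(a, b) \<in> T \<times> T. a + b = m + p} = {(m, p), (p, m)}"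
proof (intro equalityI subsetI)
  fix z assume "z \<in> {(a, b) \<in> T \<times> T. a + b = m + p}"
  then obtain a b where z: "z = (a, b)" "a \<in> T" "b \<in> T" "a + b = m + p" by auto
  have "a = m \<or> b = m"
    using assms(3) assms(4)[OF z(2)] assms(4)[OF z(3)] z(4) by linarith
  then show "z \<in> {(m, p), (p, m)}" using z by auto
qed (use assms in auto)

lemma pairs_at_least_positive:
  fixes T :: "real set"
  assumes "0 \<in> T" "t \<in> T" "0 < t" "\<And>x. x \<in> T \<Longrightarrow> 0 \<le> x" "\<And>x. x \<in> T \<Longrightarrow> 0 < x \<Longrightarrow> t \<le> x"
  shows "{(a, b) \<in> T \<times> T. a + b = t} = {(0, t), (t, 0)}"
proof (intro equalityI subsetI)
  fix z assume "z \<in> {(a, b) \<in> T \<times> T. a + b = t}"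
  then obtain a b where z: "z = (a, b)" "a \<in> T" "b \<in> T" "a + b = t" by auto
  have "a = 0 \<or> b = 0"
    using assms(3) assms(4,5)[OF z(2)] assms(4,5)[OF z(3)] z(4) by linarith
  then show "z \<in> {(0, t), (t, 0)}" using z by auto
qed (use assms in auto)

section \<open>The one-variable problem\<close>

(* The superpotential equation restricted to the line cb + t delta through a null vertex,
   cf. Jform_on_line. *)
locale ray_equation =
  fixes T :: "real set" and f :: "real \<Rightarrow> real" and \<beta> \<gamma> :: real and g :: "real \<Rightarrow> real \<Rightarrow> real"
  assumes g_eq: "\<And>a b. g a b = ((a + b) * \<beta> + a * b * \<gamma>) * f a * f b"
    and finite_T: "finite T" and zero_in_T: "0 \<in> T" and T_nonneg: "\<And>t. t \<in> T \<Longrightarrow> 0 \<le> t"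
    and f_nonzero: "\<And>t. t \<in> T \<Longrightarrow> f t \<noteq> 0" and \<beta>_nonzero: "\<beta> \<noteq> 0"
    and support: "\<And>s. pair_sum g T s \<noteq> 0 \<Longrightarrow> s = 2 \<or> s = 4"
    and at_2: "pair_sum g T 2 \<noteq> 0"
begin

lemma pair_at_2:
  obtains a b where "a \<in> T" "b \<in> T" "a + b = 2"
proof (rule ccontr)
  assume "\<not> thesis"
  then have "{(a, b) \<in> T \<times> T. a + b = 2} = {}" using that by blast
  then have "pair_sum g T 2 = 0" by (rule pair_sum_empty)
  with at_2 show False by contradiction
qed

lemma positive_ge_2:
  assumes "t \<in> T" "0 < t"
  shows "2 \<le> t"
proof -
  define t1 where "t1 = Min {t \<in> T. 0 < t}"
  have fin_pos: "finite {t \<in> T. 0 < t}" using finite_T by simp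
  have "t1 \<in> {t \<in> T. 0 < t}"
    unfolding t1_def using fin_pos by (rule Min_in) (use assms in auto)
  then have t1: "t1 \<in> T" "0 < t1" by simp_all
  have t1_least: "t1 \<le> t" if "t \<in> T" "0 < t" for t
    unfolding t1_def using fin_pos by (rule Min_le) (simp add: that)
  have "pair_sum g T t1 = g 0 t1 + g t1 0"
    using pair_sum_swap[OF pairs_at_least_positive[OF zero_in_T t1 T_nonneg t1_least]] t1 by simp
  also have "\<dots> = 2 * t1 * \<beta> * f 0 * f t1"
    unfolding g_eq by simp
  finally have "pair_sum g T t1 \<noteq> 0"
    using t1 \<beta>_nonzero f_nonzero zero_in_T by simp
  then have "2 \<le> t1" using support by fastforce
  then show ?thesis using t1_least[OF assms] by linarith
qed

lemma large_max_isolated: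
  assumes m: "m \<in> T" "\<And>t. t \<in> T \<Longrightarrow> t \<le> m" and "2 < m"
  shows "T \<subseteq> {0, m}"
proof -
  have "pair_sum g T (m + m) = g m m"
    by (rule pair_sum_singleton[OF pairs_at_twice_max[OF m]])
  moreover have "pair_sum g T (m + m) = 0"
    using support[of "m + m"] \<open>2 < m\<close> by auto
  moreover have "g m m = m * (2 * \<beta> + m * \<gamma>) * f m * f m"
    unfolding g_eq by (simp add: algebra_simps)
  ultimately have "m * (2 * \<beta> + m * \<gamma>) = 0"
    using f_nonzero[OF m(1)] by simp
  then have m\<gamma>: "m * \<gamma> = - 2 * \<beta>" using \<open>2 < m\<close> by simp
  define p where "p = Max (T - {m})"
  have "T - {m} \<noteq> {}" using zero_in_T \<open>2 < m\<close> by auto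
  then have p: "p \<in> T" "p \<noteq> m" "\<And>t. t \<in> T \<Longrightarrow> t \<noteq> m \<Longrightarrow> t \<le> p"
    using finite_T Max_in[of "T - {m}"] unfolding p_def by auto
  then have "p < m" using m(2) by force
  have "(m + p) * \<beta> + m * p * \<gamma> = (m + p) * \<beta> + p * (m * \<gamma>)"
    by (simp add: mult.commute mult.left_commute)
  also have "\<dots> = (m - p) * \<beta>"
    unfolding m\<gamma> by (simp add: algebra_simps)
  finally have "g m p = (m - p) * \<beta> * f m * f p"
    unfolding g_eq by simp
  moreover have "g p m = g m p"
    unfolding g_eq by (simp add: algebra_simps)
  moreover have "pair_sum g T (m + p) = g m p + g p m"
    by (rule pair_sum_swap[OF pairs_at_max_plus_next[OF m(1) p(1) \<open>p < m\<close> p(3)]])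
      (use \<open>p \<noteq> m\<close> in auto)
  ultimately have "pair_sum g T (m + p) = 2 * ((m - p) * \<beta> * f m * f p)"
    by simp
  then have "pair_sum g T (m + p) \<noteq> 0"
    using \<open>p < m\<close> \<beta>_nonzero f_nonzero m(1) p(1) by simp
  then have "m + p = 4" using support[of "m + p"] \<open>2 < m\<close> T_nonneg[OF p(1)] by auto
  then have "p = 0"
    using positive_ge_2[OF p(1)] T_nonneg[OF p(1)] \<open>2 < m\<close> by force
  then show ?thesis using p(3) T_nonneg by force
qed

lemma Max_eq_2: "Max T = 2"
proof -
  define m where "m = Max T"
  have m: "m \<in> T" "\<And>t. t \<in> T \<Longrightarrow> t \<le> m"
    unfolding m_def using Max_in[OF finite_T] Max_ge[OF finite_T] zero_in_T by blast+
  obtain a b where ab: "a \<in> T" "b \<in> T" "a + b = 2" by (rule pair_at_2)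
  have "2 \<le> m"
  proof (cases "0 < a")
    case True
    then show ?thesis using positive_ge_2[OF ab(1)] m(2)[OF ab(1)] by linarith
  next
    case False
    then have "0 < b" using ab(3) T_nonneg[OF ab(1)] by linarith
    then show ?thesis using positive_ge_2[OF ab(2)] m(2)[OF ab(2)] by linarith
  qed
  moreover have "\<not> 2 < m"
  proof
    assume "2 < m"
    then have "a \<in> {0, m}" "b \<in> {0, m}" using large_max_isolated[OF m] ab(1,2) by auto
    then show False using ab(3) \<open>2 < m\<close> by auto
  qed
  ultimately show ?thesis unfolding m_def by linarith
qed

lemma pairs_at_4: "{(a, b) \<in> T \<times> T. a + b = 4} = {(2, 2)}"
proof -
  have "2 \<in> T" "\<And>t. t \<in> T \<Longrightarrow> t \<le> 2"
    using Max_eq_2 Max_in[OF finite_T] Max_ge[OF finite_T] zero_in_T by auto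
  from pairs_at_twice_max[OF this] show ?thesis by simp
qed

end

section \<open>Isolated pairs and vanishing coefficients\<close>

lemma finite_arg_max:
  fixes f :: "'a \<Rightarrow> 'b::linorder"
  assumes "finite S" "S \<noteq> {}"
  obtains x where "x \<in> S" "\<And>y. y \<in> S \<Longrightarrow> f y \<le> f x"
proof -
  have "Max (f ` S) \<in> f ` S" using assms by simp
  then obtain x where "x \<in> S" "f x = Max (f ` S)" by auto
  then show ?thesis using that assms by simp
qed

lemma pairs_at_twice_wdot_max:
  assumes d_pos: "\<And>i. 0 < d$i" and "p \<in> G" and max: "\<And>x. x \<in> G \<Longrightarrow> wdot d x x \<le> wdot d p p"
  shows "{(x, y) \<in> G \<times> G. x + y = p + p} = {(p, p)}"
proof (intro equalityI subsetI)
  fix z assume "z \<in> {(x, y) \<in> G \<times> G. x + y = p + p}"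
  then obtain x y where z: "z = (x, y)" "x \<in> G" "y \<in> G" "x + y = p + p" by auto
  have "wdot d (x - y) (x - y) = 2 * wdot d x x + 2 * wdot d y y - wdot d (x + y) (x + y)"
    by (simp add: wdot_add_left wdot_add_right wdot_diff_left wdot_diff_right wdot_commute[of d y x])
  also have "wdot d (x + y) (x + y) = 4 * wdot d p p"
    unfolding z(4) by (simp only: wdot_add_left wdot_add_right)
  finally have "wdot d (x - y) (x - y) \<le> 0"
    using max[OF z(2)] max[OF z(3)] by linarith
  then have "x = y" using wdot_self_pos[OF d_pos, of "x - y"] by force
  then have "2 *\<^sub>R x = 2 *\<^sub>R p" using z(4) by (simp add: scaleR_2)
  then show "z \<in> {(p, p)}" using z \<open>x = y\<close> by simp
qed (use assms(2) in auto)

lemma pairs_at_wdot_max_plus_next: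
  assumes "p \<in> G" "q \<in> G" "q \<noteq> p"
    and next_max: "\<And>x. x \<in> G \<Longrightarrow> x \<noteq> p \<Longrightarrow> wdot d p x \<le> wdot d p q"
    and gap: "wdot d p q < wdot d p p"
  shows "{(x, y) \<in> G \<times> G. x + y = p + q} = {(p, q), (q, p)}"
proof (intro equalityI subsetI)
  fix z assume "z \<in> {(x, y) \<in> G \<times> G. x + y = p + q}"
  then obtain x y where z: "z = (x, y)" "x \<in> G" "y \<in> G" "x + y = p + q" by auto
  have "x = p \<or> y = p"
  proof (rule ccontr)
    assume "\<not> (x = p \<or> y = p)"
    then have "wdot d p x \<le> wdot d p q" "wdot d p y \<le> wdot d p q"
      using next_max z(2,3) by auto
    moreover have "wdot d p x + wdot d p y = wdot d p p + wdot d p q"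
      using z(4) by (metis wdot_add_right)
    ultimately show False using gap by linarith
  qed
  then show "z \<in> {(p, q), (q, p)}" using z by (auto simp: add.commute)
qed (use assms in \<open>auto simp: add.commute\<close>)

(* The coefficient of exp (xi . q) on the left-hand side of the superpotential equation. *)
abbreviation pair_coeff :: "real^'n \<Rightarrow> (real^'n) set \<Rightarrow> (real^'n \<Rightarrow> real) \<Rightarrow> real^'n \<Rightarrow> real" where
  "pair_coeff d C F \<equiv> pair_sum (\<lambda>x y. Jform d x y * F x * F y) C"

lemma vanishing_pair_coeffs_subsingleton:
  assumes d_pos: "\<And>i. 0 < d$i" and vsum_d: "vsum d \<noteq> 1"
    and "finite G" and G_H: "G \<subseteq> Hplane d" and F_nonzero: "\<And>x. x \<in> G \<Longrightarrow> F x \<noteq> 0"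
    and vanish: "\<And>a b. a \<in> G \<Longrightarrow> b \<in> G \<Longrightarrow> pair_coeff d G F (a + b) = 0"
    and "p \<in> G" "q \<in> G"
  shows "p = q"
proof (rule ccontr)
  assume "p \<noteq> q"
  have J: "Jform d x y = (vsum d - 1) / 4 - wdot d x y" if "x \<in> G" "y \<in> G" for x y
    using Jform_on_Hplane that G_H vsum_d by blast
  obtain p0 where p0: "p0 \<in> G" "\<And>x. x \<in> G \<Longrightarrow> wdot d x x \<le> wdot d p0 p0"
    by (rule finite_arg_max[OF \<open>finite G\<close>, where f = "\<lambda>x. wdot d x x"]) (use \<open>p \<in> G\<close> in auto)
  have "pair_coeff d G F (p0 + p0) = Jform d p0 p0 * F p0 * F p0"
    by (rule pair_sum_singleton[where g = "\<lambda>x y. Jform d x y * F x * F y",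
          OF pairs_at_twice_wdot_max[OF d_pos p0]])
  then have "Jform d p0 p0 = 0"
    using vanish[OF p0(1) p0(1)] F_nonzero[OF p0(1)] by simp
  then have p0_null: "wdot d p0 p0 = (vsum d - 1) / 4"
    using J[OF p0(1) p0(1)] by simp
  have "G - {p0} \<noteq> {}" using \<open>p \<in> G\<close> \<open>q \<in> G\<close> \<open>p \<noteq> q\<close> by blast
  obtain q0 where q0: "q0 \<in> G - {p0}"
    and q0_max: "\<And>x. x \<in> G - {p0} \<Longrightarrow> wdot d p0 x \<le> wdot d p0 q0"
    by (rule finite_arg_max[where S = "G - {p0}" and f = "wdot d p0"])
      (use \<open>finite G\<close> \<open>G - {p0} \<noteq> {}\<close> in auto)
  have gap: "wdot d p0 q0 < wdot d p0 p0"
    by (rule wdot_lt_if_norm_le[OF d_pos]) (use q0 p0(2) in auto)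
  have "pair_coeff d G F (p0 + q0) = Jform d p0 q0 * F p0 * F q0 + Jform d q0 p0 * F q0 * F p0"
    by (rule pair_sum_swap[where g = "\<lambda>x y. Jform d x y * F x * F y",
          OF pairs_at_wdot_max_plus_next[OF p0(1) _ _ _ gap]])
      (use q0 q0_max in auto)
  also have "\<dots> = 2 * ((wdot d p0 p0 - wdot d p0 q0) * F p0 * F q0)"
    using J[of p0 q0] p0 q0 p0_null by (simp add: Jform_commute[of d q0 p0])
  finally have "pair_coeff d G F (p0 + q0) \<noteq> 0"
    using gap F_nonzero p0(1) q0 by simp
  then show False using vanish[OF p0(1), of q0] q0 by simp
qed

section \<open>Convex geometry\<close>

lemma first_touching_combination:
  fixes la mu :: "'a \<Rightarrow> real"
  assumes "finite C" and la_nonneg: "\<And>x. x \<in> C \<Longrightarrow> 0 \<le> la x"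
    and la_pos: "\<And>x. x \<in> C \<Longrightarrow> mu x < 0 \<Longrightarrow> 0 < la x"
    and "x \<in> C" "mu x < 0"
  obtains s y where "0 < s" "s < 1" "\<And>z. z \<in> C \<Longrightarrow> 0 \<le> (1 - s) * la z + s * mu z"
    "y \<in> C" "mu y < 0" "(1 - s) * la y + s * mu y = 0"
proof -
  define r where "r z = la z / (la z - mu z)" for z
  define Neg where "Neg = {z \<in> C. mu z < 0}"
  have "finite Neg" "x \<in> Neg" using assms(1,4,5) unfolding Neg_def by auto
  then obtain y where y: "y \<in> Neg" "\<And>z. z \<in> Neg \<Longrightarrow> r z \<ge> r y"
    using finite_arg_max[of Neg "\<lambda>z. - r z"] by (metis empty_iff neg_le_iff_le)
  have y_C: "y \<in> C" and mu_y: "mu y < 0" using y(1) unfolding Neg_def by auto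
  have ge: "r y * (la z - mu z) \<le> la z" if "z \<in> Neg" for z
  proof -
    have "0 < la z - mu z" using that la_pos unfolding Neg_def by force
    then show ?thesis using y(2)[OF that] unfolding r_def[of z] by (simp add: pos_le_divide_eq)
  qed
  show ?thesis
  proof (rule that[of "r y" y])
    show "0 < r y" "r y < 1"
      using la_pos[OF y_C mu_y] mu_y unfolding r_def by (simp_all add: field_simps)
    show "(1 - r y) * la y + r y * mu y = 0"
      using la_pos[OF y_C mu_y] mu_y unfolding r_def by (simp add: field_simps)
    show "0 \<le> (1 - r y) * la z + r y * mu z" if "z \<in> C" for z
    proof (cases "mu z < 0")
      case True
      then show ?thesis using ge[of z] that unfolding Neg_def by (simp add: algebra_simps)
    next
      case False
      then show ?thesis using la_nonneg[OF that] \<open>0 < r y\<close> \<open>r y < 1\<close> by simp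
    qed
  qed (use y_C mu_y in auto)
qed

lemma extreme_point_strict_support:
  fixes C :: "'a::euclidean_space set"
  assumes "finite C" "c extreme_point_of convex hull C"
  obtains l where "\<And>x. x \<in> C \<Longrightarrow> x \<noteq> c \<Longrightarrow> l \<bullet> c < l \<bullet> x"
proof -
  have "convex (convex hull C - {c})"
    using assms(2) extreme_point_of_stillconvex[OF convex_convex_hull] by blast
  then have "convex hull (C - {c}) \<subseteq> convex hull C - {c}"
    by (intro hull_minimal) (auto intro: hull_inc)
  then have "c \<notin> convex hull (C - {c})" by blast
  moreover have "closed (convex hull (C - {c}))"
    using assms(1) by (simp add: compact_imp_closed compact_convex_hull finite_imp_compact)
  ultimately obtain l b where "l \<bullet> c < b" "\<forall>x\<in>convex hull (C - {c}). b < l \<bullet> x"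
    using separating_hyperplane_closed_point[OF convex_convex_hull] by blast
  then show ?thesis
    using that by (meson DiffI hull_inc le_less_trans less_imp_le singletonD)
qed

lemma collinear_on_line:
  assumes "collinear S" "v \<in> S" "w \<in> S" "x \<in> S" "v \<noteq> w"
  obtains s where "x = v + s *\<^sub>R (w - v)"
proof -
  obtain u where u: "\<forall>y\<in>S. \<forall>z\<in>S. \<exists>c. y - z = c *\<^sub>R u"
    using assms(1) unfolding collinear_def by blast
  obtain a b where "x - v = a *\<^sub>R u" "w - v = b *\<^sub>R u"
    using u assms(2-4) by blast
  moreover have "b \<noteq> 0" using calculation(2) assms(5) by auto
  ultimately have "x = v + (a / b) *\<^sub>R (w - v)" by (simp add: algebra_simps)
  then show ?thesis by (rule that)
qed

section \<open>Exponents of type I, II, III\<close>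

definition bar :: "real^'n \<Rightarrow> real^'n \<Rightarrow> real^'n" where
  "bar d x = (1/2) *\<^sub>R (d + x)"

lemma bar_reflect: "bar d (2 *\<^sub>R x - d) = x"
  by (simp add: bar_def)

lemma vsum_of_type:
  assumes "type_I u \<or> type_II u \<or> type_III u"
  shows "vsum u = -1"
  using assms
proof (elim disjE)
  assume "type_I u"
  then obtain i where "u$i = -1" "\<And>l. l \<noteq> i \<Longrightarrow> u$l = 0" unfolding type_I_def by blast
  then show ?thesis using vsum_eq_sum_support[of "{i}" u] by simp
next
  assume "type_II u"
  then obtain i j k where "i \<noteq> j" "i \<noteq> k" "j \<noteq> k" "u$i = 1" "u$j = -1" "u$k = -1"
    "\<And>l. l \<notin> {i, j, k} \<Longrightarrow> u$l = 0" unfolding type_II_def by auto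
  then show ?thesis using vsum_eq_sum_support[of "{i, j, k}" u] by simp
next
  assume "type_III u"
  then obtain i j where "i \<noteq> j" "u$i = 1" "u$j = -2" "\<And>l. l \<notin> {i, j} \<Longrightarrow> u$l = 0"
    unfolding type_III_def by auto
  then show ?thesis using vsum_eq_sum_support[of "{i, j}" u] by simp
qed

lemma type_entries:
  assumes "type_I u \<or> type_II u \<or> type_III u"
  shows "u$i = -2 \<or> u$i = -1 \<or> u$i = 0 \<or> u$i = 1"
  using assms unfolding type_I_def type_II_def type_III_def
  by (metis (no_types, opaque_lifting))

lemma type_III_if_entry_minus_two:
  assumes "type_I u \<or> type_II u \<or> type_III u" "u$i = -2"
  shows "type_III u"
  using assms unfolding type_I_def type_II_def type_III_def
  by (smt (verit))

lemma Jform_bar_reflection: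
  assumes d_nonzero: "\<And>i. d$i \<noteq> 0" and "vsum v = vsum w"
    and reflection: "2 *\<^sub>R c - d = 2 *\<^sub>R v - w"
  shows "Jform d (bar d w) (bar d w) = Jform d c c + (\<Sum>i\<in>UNIV. v$i * (v$i - w$i) / d$i)"
proof -
  have c: "c$i = (d$i + 2 * v$i - w$i) / 2" for i
  proof -
    have "(2 *\<^sub>R c - d)$i = (2 *\<^sub>R v - w)$i" using reflection by simp
    then show ?thesis by simp
  qed
  have "2 * vsum c = vsum d + 2 * vsum v - vsum w"
    using arg_cong[OF reflection, of vsum] by simp
  then have "vsum (bar d w) = vsum c"
    using \<open>vsum v = vsum w\<close> by (simp add: bar_def)
  moreover have "wdot d c c - wdot d (bar d w) (bar d w)
      = (\<Sum>i\<in>UNIV. (v$i - w$i) + v$i * (v$i - w$i) / d$i)"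
    unfolding wdot_def sum_subtractf[symmetric]
    by (rule sum.cong) (use d_nonzero in \<open>simp_all add: c bar_def field_simps\<close>)
  moreover have "(\<Sum>i\<in>UNIV. (v$i - w$i) + v$i * (v$i - w$i) / d$i)
      = (vsum v - vsum w) + (\<Sum>i\<in>UNIV. v$i * (v$i - w$i) / d$i)"
    by (simp add: vsum_def sum.distrib sum_subtractf)
  ultimately show ?thesis
    using \<open>vsum v = vsum w\<close> by (simp add: Jform_eq_wdot)
qed

lemma reflection_sum_nonneg:
  assumes "\<And>i. 0 < d$i"
    and "type_I v \<or> type_II v \<or> type_III v" "type_I w \<or> type_II w \<or> type_III w"
    and "\<not> (\<exists>i. v$i = -1 \<and> w$i = -2)"
  shows "0 \<le> (\<Sum>i\<in>UNIV. v$i * (v$i - w$i) / d$i)"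
proof (rule sum_nonneg)
  fix i
  have "0 \<le> v$i * (v$i - w$i)"
    using type_entries[OF assms(2), of i] type_entries[OF assms(3), of i] assms(4) by auto
  then show "0 \<le> v$i * (v$i - w$i) / d$i"
    using assms(1)[of i] by simp
qed

lemma type_I_or_III_of_null_reflection:
  fixes a f :: real
  assumes d_pos: "\<And>i. 0 < d$i"
    and v_type: "type_I v \<or> type_II v \<or> type_III v" and w_type: "type_I w \<or> type_II w \<or> type_III w"
    and reflection: "2 *\<^sub>R c - d = 2 *\<^sub>R v - w" and null: "Jform d c c = 0"
    and a: "a = Jform d (bar d w) (bar d w) * f * f" and sign: "\<not> type_I w \<Longrightarrow> a < 0"
  shows "type_I w \<or> (type_III w \<and> (\<exists>i. v$i = -1 \<and> w$i = -2))"
proof (cases "\<exists>i. v$i = -1 \<and> w$i = -2")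
  case True
  then show ?thesis using type_III_if_entry_minus_two[OF w_type] by blast
next
  case False
  have "vsum v = vsum w" using vsum_of_type[OF v_type] vsum_of_type[OF w_type] by simp
  then have "Jform d (bar d w) (bar d w) = (\<Sum>i\<in>UNIV. v$i * (v$i - w$i) / d$i)"
    using Jform_bar_reflection[OF _ _ reflection] d_pos null by (simp add: less_imp_neq[symmetric])
  also have "0 \<le> \<dots>" using reflection_sum_nonneg[OF d_pos v_type w_type False] .
  finally have "0 \<le> a" unfolding a by (simp add: mult.assoc)
  then show ?thesis using sign by force
qed

section \<open>Exponents near a null vertex\<close>

locale superpotential_data =
  fixes d :: "real^'n" and W :: "(real^'n) set" and A :: "real^'n \<Rightarrow> real"
    and C :: "(real^'n) set" and F :: "real^'n \<Rightarrow> real"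
  assumes d_pos: "\<And>i. 0 < d$i" and vsum_d_ne_1: "vsum d \<noteq> 1"
    and finite_W: "finite W" and A_nonzero: "\<And>u. u \<in> W \<Longrightarrow> A u \<noteq> 0"
    and superpotential: "superpotential d W A C F"
begin

lemma finite_C: "finite C"
  and F_nonzero: "x \<in> C \<Longrightarrow> F x \<noteq> 0"
  and C_Hplane: "C \<subseteq> Hplane d"
  using superpotential unfolding superpotential_def by auto

lemma pair_coeff_eq: "pair_coeff d C F \<xi> = (if \<xi> - d \<in> W then A (\<xi> - d) else 0)"
  using superpotential unfolding superpotential_def pair_sum_def by blast

lemma W_splits:
  assumes "u \<in> W"
  obtains a b where "a \<in> C" "b \<in> C" "a + b = d + u"
proof (rule ccontr)
  assume "\<not> thesis"
  then have "{(a, b) \<in> C \<times> C. a + b = d + u} = {}" using that by blast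
  then have "pair_coeff d C F (d + u) = 0" by (rule pair_sum_empty)
  then show False using pair_coeff_eq[of "d + u"] assms A_nonzero by simp
qed

lemma functional_zeros_subsingleton:
  assumes nonneg_C: "\<And>x. x \<in> C \<Longrightarrow> 0 \<le> L \<bullet> x + K"
    and pos_W: "\<And>u. u \<in> W \<Longrightarrow> 0 < L \<bullet> bar d u + K"
    and "p \<in> C" "L \<bullet> p + K = 0" "q \<in> C" "L \<bullet> q + K = 0"
  shows "p = q"
proof -
  define G where "G = {z \<in> C. L \<bullet> z + K = 0}"
  have split: "x \<in> G \<and> y \<in> G" if "a \<in> G" "b \<in> G" "x \<in> C" "y \<in> C" "x + y = a + b" for a b x y
  proof -
    have "L \<bullet> x + L \<bullet> y = L \<bullet> a + L \<bullet> b"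
      by (simp only: inner_add_right[symmetric] that(5))
    moreover have "L \<bullet> a + K = 0" "L \<bullet> b + K = 0" using that(1,2) unfolding G_def by simp_all
    moreover have "0 \<le> L \<bullet> x + K" "0 \<le> L \<bullet> y + K" using nonneg_C that(3,4) by blast+
    ultimately show ?thesis using that(3,4) unfolding G_def by auto
  qed
  have off_W: "a + b - d \<notin> W" if "a \<in> G" "b \<in> G" for a b
  proof -
    have "bar d (a + b - d) = (1/2) *\<^sub>R (a + b)" by (simp add: bar_def)
    then have "L \<bullet> bar d (a + b - d) + K = ((L \<bullet> a + K) + (L \<bullet> b + K)) / 2"
      by (simp add: inner_add_right)
    also have "\<dots> = 0" using that unfolding G_def by simp
    finally show ?thesis using pos_W by force
  qed
  show ?thesis
  proof (rule vanishing_pair_coeffs_subsingleton[OF d_pos vsum_d_ne_1, where G = G])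
    show "finite G" "G \<subseteq> Hplane d" "\<And>x. x \<in> G \<Longrightarrow> F x \<noteq> 0"
      using finite_C C_Hplane F_nonzero unfolding G_def by auto
    show "p \<in> G" "q \<in> G" using assms(3-6) unfolding G_def by auto
    show "pair_coeff d G F (a + b) = 0" if "a \<in> G" "b \<in> G" for a b
    proof -
      have "G \<subseteq> C" unfolding G_def by auto
      then have "pair_coeff d C F (a + b) = pair_coeff d G F (a + b)"
        by (rule pair_sum_subset) (rule split[OF that])
      then show ?thesis using pair_coeff_eq[of "a + b"] off_W[OF that] by simp
    qed
  qed
qed

end

locale null_vertex = superpotential_data +
  fixes cb :: "real^'n"
  assumes cb_vertex: "cb extreme_point_of convex hull C"
    and cb_null: "Jform d cb cb = 0"
    and cb_not_bar: "cb \<notin> bar d ` W"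
begin

lemma cb_in_C: "cb \<in> C"
  using cb_vertex extreme_point_of_convex_hull by blast

lemma bar_W_above_vertex:
  assumes support: "\<And>x. x \<in> C \<Longrightarrow> x \<noteq> cb \<Longrightarrow> l \<bullet> cb < l \<bullet> x" and "u \<in> W"
  shows "l \<bullet> cb < l \<bullet> bar d u"
proof -
  obtain a b where ab: "a \<in> C" "b \<in> C" "a + b = d + u"
    using W_splits[OF \<open>u \<in> W\<close>] .
  have "\<not> (a = cb \<and> b = cb)"
  proof
    assume "a = cb \<and> b = cb"
    then have "bar d u = cb" using ab(3) unfolding bar_def by (metis scaleR_2 scaleR_half_double)
    then show False using cb_not_bar \<open>u \<in> W\<close> by blast
  qed
  then have "l \<bullet> cb < l \<bullet> a \<or> l \<bullet> cb < l \<bullet> b" and "l \<bullet> cb \<le> l \<bullet> a" "l \<bullet> cb \<le> l \<bullet> b"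
    using support ab(1,2) by (metis order.strict_implies_order order_refl)+
  moreover have "l \<bullet> bar d u = (l \<bullet> a + l \<bullet> b) / 2"
    unfolding bar_def ab(3)[symmetric] by (simp add: inner_add_right)
  ultimately show ?thesis by argo
qed

lemma affine_nonneg_on_C:
  assumes nonneg_W: "\<And>u. u \<in> W \<Longrightarrow> 0 \<le> l \<bullet> bar d u + k" and vertex: "l \<bullet> cb + k = 0"
    and "x \<in> C"
  shows "0 \<le> l \<bullet> x + k"
proof (rule ccontr)
  assume neg: "\<not> 0 \<le> l \<bullet> x + k"
  obtain l0 where l0: "\<And>y. y \<in> C \<Longrightarrow> y \<noteq> cb \<Longrightarrow> l0 \<bullet> cb < l0 \<bullet> y"
    using extreme_point_strict_support[OF finite_C cb_vertex] by blast
  define la where "la y = l0 \<bullet> y - l0 \<bullet> cb" for y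
  define mu where "mu y = l \<bullet> y + k" for y
  have la_nonneg: "0 \<le> la y" if "y \<in> C" for y
    using l0[OF that] unfolding la_def by (cases "y = cb") auto
  have la_pos: "0 < la y" if "y \<in> C" "mu y < 0" for y
    using l0[OF that(1)] that(2) vertex unfolding la_def mu_def by force
  obtain s y where s: "0 < s" "s < 1"
    and nu_nonneg: "\<And>z. z \<in> C \<Longrightarrow> 0 \<le> (1 - s) * la z + s * mu z"
    and y: "y \<in> C" "mu y < 0" "(1 - s) * la y + s * mu y = 0"
    by (rule first_touching_combination[OF finite_C la_nonneg la_pos \<open>x \<in> C\<close>])
      (use neg in \<open>auto simp: mu_def\<close>)
  define L where "L = (1 - s) *\<^sub>R l0 + s *\<^sub>R l"
  define K where "K = s * k - (1 - s) * (l0 \<bullet> cb)"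
  have nu: "(1 - s) * la z + s * mu z = L \<bullet> z + K" for z
    unfolding la_def mu_def L_def K_def by (simp add: inner_add_left algebra_simps)
  have "cb = y"
  proof (rule functional_zeros_subsingleton[of L K])
    show "0 \<le> L \<bullet> z + K" if "z \<in> C" for z
      using nu_nonneg[OF that] unfolding nu .
    show "0 < L \<bullet> bar d u + K" if "u \<in> W" for u
    proof -
      have "0 < la (bar d u)" using bar_W_above_vertex[OF l0 that] unfolding la_def by simp
      moreover have "0 \<le> mu (bar d u)" using nonneg_W[OF that] unfolding mu_def .
      ultimately have "0 < (1 - s) * la (bar d u) + s * mu (bar d u)"
        using s by (simp add: add_pos_nonneg)
      then show ?thesis unfolding nu .
    qed
    show "cb \<in> C" "L \<bullet> cb + K = 0"
      using cb_in_C vertex nu[of cb] unfolding la_def mu_def by auto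
    show "y \<in> C" "L \<bullet> y + K = 0"
      using y(1,3) unfolding nu by auto
  qed
  then show False using y(2) vertex unfolding mu_def by simp
qed

(* Adding a large multiple of l to m makes it nonnegative on bar d ` W. *)
lemma nonneg_along_zero_set:
  assumes nonneg_W: "\<And>u. u \<in> W \<Longrightarrow> 0 \<le> l \<bullet> bar d u + k" and vertex: "l \<bullet> cb + k = 0"
    and flat: "\<And>u. u \<in> W \<Longrightarrow> l \<bullet> bar d u + k = 0 \<Longrightarrow> m \<bullet> (bar d u - cb) = 0"
    and "x \<in> C" "l \<bullet> x + k = 0"
  shows "0 \<le> m \<bullet> (x - cb)"
proof -
  define M where "M = (\<Sum>u\<in>W. \<bar>m \<bullet> (bar d u - cb)\<bar> / (l \<bullet> bar d u + k))"
  have shift: "(m + M *\<^sub>R l) \<bullet> z + (M * k - m \<bullet> cb) = m \<bullet> (z - cb) + M * (l \<bullet> z + k)" for z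
    by (simp add: inner_add_left inner_diff_right algebra_simps)
  have "0 \<le> (m + M *\<^sub>R l) \<bullet> x + (M * k - m \<bullet> cb)"
  proof (rule affine_nonneg_on_C[OF _ _ \<open>x \<in> C\<close>])
    show "0 \<le> (m + M *\<^sub>R l) \<bullet> bar d u + (M * k - m \<bullet> cb)" if "u \<in> W" for u
    proof (cases "l \<bullet> bar d u + k = 0")
      case True
      then show ?thesis using flat[OF that] unfolding shift by simp
    next
      case False
      then have pos: "0 < l \<bullet> bar d u + k" using nonneg_W[OF that] by simp
      have "\<bar>m \<bullet> (bar d u - cb)\<bar> / (l \<bullet> bar d u + k) \<le> M"
        unfolding M_def by (rule member_le_sum) (use that finite_W nonneg_W in auto)
      then have "\<bar>m \<bullet> (bar d u - cb)\<bar> \<le> M * (l \<bullet> bar d u + k)"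
        using pos by (simp add: divide_le_eq)
      then show ?thesis unfolding shift by linarith
    qed
    show "(m + M *\<^sub>R l) \<bullet> cb + (M * k - m \<bullet> cb) = 0"
      unfolding shift vertex by simp
  qed
  then show ?thesis using \<open>l \<bullet> x + k = 0\<close> unfolding shift by simp
qed

lemma zero_set_on_line:
  assumes nonneg_W: "\<And>u. u \<in> W \<Longrightarrow> 0 \<le> l \<bullet> bar d u + k" and vertex: "l \<bullet> cb + k = 0"
    and on_line: "\<And>u. u \<in> W \<Longrightarrow> l \<bullet> bar d u + k = 0 \<Longrightarrow> \<exists>t. bar d u = cb + t *\<^sub>R \<delta>"
    and "x \<in> C" "l \<bullet> x + k = 0"
  shows "\<exists>t. x = cb + t *\<^sub>R \<delta>"
proof -
  define t where "t = ((x - cb) \<bullet> \<delta>) / (\<delta> \<bullet> \<delta>)"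
  define e where "e = x - cb - t *\<^sub>R \<delta>"
  have e_perp: "e \<bullet> \<delta> = 0"
    unfolding e_def t_def by (cases "\<delta> = 0") (simp_all add: inner_diff_left)
  have flat: "n \<bullet> (bar d u - cb) = 0" if "n \<bullet> \<delta> = 0" "u \<in> W" "l \<bullet> bar d u + k = 0" for n u
    using on_line[OF that(2,3)] that(1) by auto
  have "0 \<le> e \<bullet> (x - cb)"
    by (rule nonneg_along_zero_set[OF nonneg_W vertex flat[OF e_perp] \<open>x \<in> C\<close> \<open>l \<bullet> x + k = 0\<close>])
  moreover have "0 \<le> (- e) \<bullet> (x - cb)"
  proof -
    have "(- e) \<bullet> \<delta> = 0" using e_perp by simp
    from nonneg_along_zero_set[OF nonneg_W vertex flat[OF this] \<open>x \<in> C\<close> \<open>l \<bullet> x + k = 0\<close>]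
    show ?thesis .
  qed
  ultimately have "e \<bullet> (x - cb) = 0" by simp
  moreover have "e \<bullet> e = e \<bullet> (x - cb)"
    using e_perp unfolding e_def by (simp add: inner_diff_right)
  ultimately have "e = 0" by simp
  then have "x = cb + t *\<^sub>R \<delta>" unfolding e_def by (simp add: algebra_simps)
  then show ?thesis ..
qed

end

section \<open>The reflected edge\<close>

locale reflected_edge = null_vertex +
  fixes v w :: "real^'n"
  assumes v_in_W: "v \<in> W" and w_in_W: "w \<in> W"
    and edge_face: "convex hull {v, w} face_of convex hull W"
    and edge_no_W: "W \<inter> open_segment v w = {}"
    and reflection: "2 *\<^sub>R cb - d = 2 *\<^sub>R v - w"
begin

abbreviation edge_dir :: "real^'n" where
  "edge_dir \<equiv> bar d v - cb"

abbreviation edge_line :: "real \<Rightarrow> real^'n" where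
  "edge_line t \<equiv> cb + t *\<^sub>R edge_dir"

lemma edge_dir_nonzero: "edge_dir \<noteq> 0"
  using cb_not_bar v_in_W by auto

lemma cb_component: "cb$i = (d$i + 2 * v$i - w$i) / 2"
proof -
  have "(2 *\<^sub>R cb - d)$i = (2 *\<^sub>R v - w)$i" using reflection by simp
  then show ?thesis by simp
qed

lemma edge_dir_eq: "edge_dir = (1/2) *\<^sub>R (w - v)"
  by (simp add: vec_eq_iff bar_def cb_component field_simps)

lemma bar_on_edge_line: "bar d (v + s *\<^sub>R (w - v)) = edge_line (1 + s)"
  by (simp add: vec_eq_iff bar_def cb_component field_simps)

lemma twice_edge_line: "2 *\<^sub>R cb + s *\<^sub>R edge_dir - d = v + (s / 2 - 1) *\<^sub>R (w - v)"
  by (simp add: vec_eq_iff bar_def cb_component field_simps)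

lemma inj_edge_line: "inj edge_line"
  using edge_dir_nonzero by (simp add: inj_def)

lemma edge_functional:
  obtains l k where "\<And>u. u \<in> W \<Longrightarrow> 0 \<le> l \<bullet> bar d u + k"
    "\<And>u. u \<in> W \<Longrightarrow> l \<bullet> bar d u + k = 0 \<Longrightarrow> u = v \<or> u = w"
    "l \<bullet> cb + k = 0" "l \<bullet> edge_dir = 0"
proof -
  have "convex hull {v, w} exposed_face_of convex hull W"
    using exposed_face_of_polyhedron[OF polyhedron_convex_hull[OF finite_W]] edge_face by blast
  then obtain a b where below: "convex hull W \<subseteq> {x. a \<bullet> x \<le> b}"
    and face: "convex hull {v, w} = convex hull W \<inter> {x. a \<bullet> x = b}"
    unfolding exposed_face_of_def by blast
  have on_face: "a \<bullet> v = b" "a \<bullet> w = b"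
    using face hull_inc[of v "{v, w}"] hull_inc[of w "{v, w}"] by auto
  define l where "l = (-2) *\<^sub>R a"
  define k where "k = b + a \<bullet> d"
  have value_bar: "l \<bullet> bar d u + k = b - a \<bullet> u" for u
    unfolding l_def k_def bar_def by (simp add: inner_add_right field_simps)
  have value_cb: "l \<bullet> cb + k = 0"
  proof -
    have "2 *\<^sub>R cb = d + 2 *\<^sub>R v - w" using reflection by (simp add: algebra_simps)
    have "l \<bullet> cb = - (a \<bullet> (2 *\<^sub>R cb))" unfolding l_def by simp
    also have "\<dots> = - (a \<bullet> d) - 2 * (a \<bullet> v) + a \<bullet> w"
      unfolding \<open>2 *\<^sub>R cb = d + 2 *\<^sub>R v - w\<close> by (simp add: inner_add_right inner_diff_right)
    finally have "l \<bullet> cb = - (a \<bullet> d) - 2 * (a \<bullet> v) + a \<bullet> w" .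
    then show ?thesis unfolding k_def using on_face by simp
  qed
  show ?thesis
  proof (rule that)
    show "0 \<le> l \<bullet> bar d u + k" if "u \<in> W" for u
      using below hull_inc[OF that] unfolding value_bar by auto
    show "u = v \<or> u = w" if "u \<in> W" "l \<bullet> bar d u + k = 0" for u
    proof -
      have "u \<in> closed_segment v w"
        using face hull_inc[OF that(1)] that(2) unfolding value_bar segment_convex_hull by auto
      then show ?thesis using edge_no_W that(1) unfolding open_segment_def by auto
    qed
    show "l \<bullet> cb + k = 0" by (rule value_cb)
    show "l \<bullet> edge_dir = 0"
      using value_bar[of v] value_cb on_face by (simp add: inner_diff_right)
  qed
qed

lemma C_pairs_on_edge_line:
  assumes "x \<in> C" "y \<in> C" "x + y = 2 *\<^sub>R cb + s *\<^sub>R edge_dir"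
  shows "x \<in> range edge_line \<and> y \<in> range edge_line"
proof -
  obtain l k where nonneg_W: "\<And>u. u \<in> W \<Longrightarrow> 0 \<le> l \<bullet> bar d u + k"
    and zero_W: "\<And>u. u \<in> W \<Longrightarrow> l \<bullet> bar d u + k = 0 \<Longrightarrow> u = v \<or> u = w"
    and vertex: "l \<bullet> cb + k = 0" and perp: "l \<bullet> edge_dir = 0"
    using edge_functional by blast
  have on_line: "\<exists>t. bar d u = edge_line t" if "u \<in> W" "l \<bullet> bar d u + k = 0" for u
  proof -
    have "bar d v = edge_line 1" "bar d w = edge_line 2"
      using bar_on_edge_line[of 0] bar_on_edge_line[of 1] by simp_all
    then show ?thesis using zero_W[OF that] by blast
  qed
  have "l \<bullet> x + l \<bullet> y = l \<bullet> (2 *\<^sub>R cb + s *\<^sub>R edge_dir)"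
    unfolding assms(3)[symmetric] by (simp only: inner_add_right)
  then have "(l \<bullet> x + k) + (l \<bullet> y + k) = 0"
    using vertex perp by (simp add: inner_add_right inner_diff_right)
  moreover have "0 \<le> l \<bullet> x + k" "0 \<le> l \<bullet> y + k"
    using affine_nonneg_on_C[OF nonneg_W vertex] assms(1,2) by blast+
  ultimately have "l \<bullet> x + k = 0" "l \<bullet> y + k = 0" by linarith+
  then show ?thesis
    using zero_set_on_line[OF nonneg_W vertex on_line] assms(1,2) by blast
qed

lemma W_on_edge_line:
  assumes "2 *\<^sub>R cb + s *\<^sub>R edge_dir - d \<in> W"
  shows "s = 2 \<or> s = 4"
proof -
  obtain l k where "\<And>u. u \<in> W \<Longrightarrow> 0 \<le> l \<bullet> bar d u + k"
    and zero_W: "\<And>u. u \<in> W \<Longrightarrow> l \<bullet> bar d u + k = 0 \<Longrightarrow> u = v \<or> u = w"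
    and vertex: "l \<bullet> cb + k = 0" and perp: "l \<bullet> edge_dir = 0"
    using edge_functional by blast
  define c where "c = s / 2 - 1"
  have u: "2 *\<^sub>R cb + s *\<^sub>R edge_dir - d = v + c *\<^sub>R (w - v)"
    unfolding c_def by (rule twice_edge_line)
  have "l \<bullet> bar d (v + c *\<^sub>R (w - v)) + k = 0"
    unfolding bar_on_edge_line using vertex perp by (simp add: inner_add_right)
  then have "v + c *\<^sub>R (w - v) = v \<or> v + c *\<^sub>R (w - v) = w"
    using zero_W assms unfolding u by blast
  moreover have "(c - 1) *\<^sub>R (w - v) = (v + c *\<^sub>R (w - v)) - w"
    by (simp add: algebra_simps scaleR_left_diff_distrib)
  ultimately have "c *\<^sub>R (w - v) = 0 \<or> (c - 1) *\<^sub>R (w - v) = 0" by auto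
  moreover have "w - v \<noteq> 0" using edge_dir_nonzero edge_dir_eq by auto
  ultimately have "c = 0 \<or> c = 1" by simp
  then show ?thesis unfolding c_def by auto
qed

lemma edge_line_in_C_nonneg:
  assumes "edge_line t \<in> C"
  shows "0 \<le> t"
proof (rule ccontr)
  assume "\<not> 0 \<le> t"
  obtain l0 where l0: "\<And>y. y \<in> C \<Longrightarrow> y \<noteq> cb \<Longrightarrow> l0 \<bullet> cb < l0 \<bullet> y"
    using extreme_point_strict_support[OF finite_C cb_vertex] by blast
  have "0 < l0 \<bullet> edge_dir"
    using bar_W_above_vertex[OF l0 v_in_W] by (simp add: inner_diff_right)
  moreover have "edge_line t \<noteq> cb" using \<open>\<not> 0 \<le> t\<close> edge_dir_nonzero by auto
  then have "0 < t * (l0 \<bullet> edge_dir)"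
    using l0[OF assms] by (simp add: inner_add_right)
  ultimately show False using \<open>\<not> 0 \<le> t\<close> by (simp add: zero_less_mult_iff)
qed

theorem A_w_eq:
  assumes "Jform d cb edge_dir \<noteq> 0"
  shows "A w = Jform d (bar d w) (bar d w) * F (bar d w) * F (bar d w)"
proof -
  define Q where "Q s = 2 *\<^sub>R cb + s *\<^sub>R edge_dir" for s
  define T where "T = edge_line -` C"
  define \<beta> \<gamma> where "\<beta> = Jform d cb edge_dir" and "\<gamma> = Jform d edge_dir edge_dir"
  define g where "g a b = ((a + b) * \<beta> + a * b * \<gamma>) * F (edge_line a) * F (edge_line b)" for a b
  have Q_inj: "inj Q" using edge_dir_nonzero by (simp add: inj_def Q_def)
  have line_add: "edge_line a + edge_line b = Q (a + b)" for a b
    unfolding Q_def by (simp add: scaleR_2 scaleR_left_distrib algebra_simps)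
  have coeff: "pair_coeff d C F (Q s) = pair_sum g T s" for s
    unfolding T_def g_def \<beta>_def \<gamma>_def Jform_on_line[OF cb_null, symmetric]
    by (rule pair_sum_reindex[OF inj_edge_line Q_inj line_add])
      (use C_pairs_on_edge_line in \<open>auto simp: Q_def\<close>)
  have coeff_W: "pair_sum g T s = (if Q s - d \<in> W then A (Q s - d) else 0)" for s
    using pair_coeff_eq[of "Q s"] coeff by simp
  have Q_v: "Q 2 - d = v" and Q_w: "Q 4 - d = w"
    unfolding Q_def twice_edge_line by simp_all
  interpret ray_equation T "\<lambda>t. F (edge_line t)" \<beta> \<gamma> g
  proof unfold_locales
    show "g a b = ((a + b) * \<beta> + a * b * \<gamma>) * F (edge_line a) * F (edge_line b)" for a b
      by (rule g_def)
    show "finite T" unfolding T_def by (rule finite_vimageI[OF finite_C inj_edge_line])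
    show "0 \<in> T" unfolding T_def using cb_in_C by simp
    show "0 \<le> t" if "t \<in> T" for t using that edge_line_in_C_nonneg unfolding T_def by simp
    show "F (edge_line t) \<noteq> 0" if "t \<in> T" for t using that F_nonzero unfolding T_def by simp
    show "\<beta> \<noteq> 0" unfolding \<beta>_def by (rule assms)
    show "s = 2 \<or> s = 4" if "pair_sum g T s \<noteq> 0" for s
      using that coeff_W[of s] W_on_edge_line unfolding Q_def by (auto split: if_splits)
    show "pair_sum g T 2 \<noteq> 0"
      using coeff_W[of 2] Q_v v_in_W A_nonzero by simp
  qed
  from pairs_at_4 have "pair_sum g T 4 = g 2 2"
    by (rule pair_sum_singleton)
  moreover have "edge_line 2 = bar d w"
    using bar_on_edge_line[of 1] by simp
  ultimately show ?thesis
    using coeff_W[of 4] Q_w w_in_W Jform_on_line[OF cb_null, of 2 edge_dir 2]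
    unfolding g_def \<beta>_def \<gamma>_def by simp
qed

end

theorem lemma3p13:
  fixes d :: "real^'n" and W :: "(real^'n) set" and A :: "real^'n \<Rightarrow> real"
    and C :: "(real^'n) set" and F :: "real^'n \<Rightarrow> real"
    and cb xib v w a :: "real^'n" and b :: real
  assumes r2: "CARD('n) \<ge> 2"
    and d_pos: "\<forall>i. d$i \<in> \<nat> \<and> d$i \<ge> 1"
    and W_fin: "finite W"
    and W_types: "\<forall>u\<in>W. type_I u \<or> type_II u \<or> type_III u"
    and A_nz: "\<forall>u\<in>W. A u \<noteq> 0"
    and A_I: "\<forall>u\<in>W. type_I u \<longrightarrow> A u > 0"
    and A_other: "\<forall>u\<in>W. \<not> type_I u \<longrightarrow> A u < 0"
    and W_dim: "aff_dim (convex hull W) = int CARD('n) - 1"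
    and superpot: "superpotential d W A C F"
    and cb_vertex: "cb extreme_point_of (convex hull C)"
    and cb_null: "Jform d cb cb = 0"
    and cb_out: "cb \<notin> convex hull ((\<lambda>u. (1/2) *\<^sub>R (d + u)) ` W)"
    and sep_c: "a \<bullet> cb < b"
    and sep_W: "\<forall>z\<in>convex hull ((\<lambda>u. (1/2) *\<^sub>R (d + u)) ` W). a \<bullet> z > b"
    and xib_vertex: "xib extreme_point_of
        {y. y \<in> Hplane d \<and> a \<bullet> y = b \<and>
            (\<exists>z\<in>convex hull ((\<lambda>u. (1/2) *\<^sub>R (d + u)) ` W).
               \<exists>t\<ge>0. y = cb + t *\<^sub>R (z - cb))}"
    and xib_J: "Jform d cb xib \<noteq> 0"
    and xib_edge: "\<exists>E. E face_of convex hull ((\<lambda>u. (1/2) *\<^sub>R (d + u)) ` W) \<and>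
                       aff_dim E = 1 \<and> collinear ({cb, xib} \<union> E)"
    and vW: "v \<in> W" and wW: "w \<in> W" and vw: "v \<noteq> w"
    and vw_edge: "convex hull {v, w} face_of convex hull W"
    and vw_empty: "W \<inter> open_segment v w = {}"
    and vw_coll: "collinear {2 *\<^sub>R cb - d, 2 *\<^sub>R xib - d, v, w}"
    and c_eq: "2 *\<^sub>R cb - d = 2 *\<^sub>R v - w"
  shows "type_I w \<or> (type_III w \<and> (\<exists>i. v$i = -1 \<and> w$i = -2))"
proof -
  have d_pos': "\<And>i. 0 < d$i" using d_pos by (meson less_le_trans zero_less_one)
  have "real CARD('n) \<le> vsum d"
    unfolding vsum_def using sum_mono[of UNIV "\<lambda>_. 1" "\<lambda>i. d$i"] d_pos by simp
  then have vsum_d: "vsum d \<noteq> 1" using r2 by linarith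
  have bar_eq: "(\<lambda>u. (1/2) *\<^sub>R (d + u)) = bar d" by (simp add: fun_eq_iff bar_def)
  interpret reflected_edge d W A C F cb v w
    by unfold_locales
      (use d_pos' vsum_d W_fin A_nz superpot cb_vertex cb_null vW wW vw_edge vw_empty c_eq
        cb_out[unfolded bar_eq] in \<open>auto intro: hull_inc\<close>)
  obtain s where "2 *\<^sub>R xib - d = v + s *\<^sub>R (w - v)"
    using collinear_on_line[OF vw_coll] vw by blast
  then have "xib = edge_line (1 + s)"
    using bar_reflect[of d xib] bar_on_edge_line[of s] by simp
  then have "Jform d cb edge_dir \<noteq> 0"
    using xib_J Jform_on_line[OF cb_null, of 0 edge_dir "1 + s"] by auto
  then have "A w = Jform d (bar d w) (bar d w) * F (bar d w) * F (bar d w)"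
    by (rule A_w_eq)
  then show ?thesis
    using type_I_or_III_of_null_reflection[OF d_pos' _ _ c_eq cb_null] W_types vW wW A_other
    by blast
qed

end
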